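(* Let $s\in\mathscr S_+$ and let $\operatorname{supp}(s)=X_0\amalg X_1\amalg\cdots\amalg X_k$ be its interval decomposition, with $l_i:=\#X_i$ for $i\in[0,k]$. Then $$\mathfrak d(s)=l_0+2\left\lceil \tfrac{l_1}{2}\right\rceil+\cdots+2\left\lceil \tfrac{l_k}{2}\right\rceil .$$
   Context: $\omega$ denotes the natural numbers including $0$; $[n,m]=\{x\in\omega:n\le x\le m\}$, $[m]=[1,m]$. A finite sign sequence is $s=(s_i)_{i\in\omega}\in\{-,0,+\}^\omega$ with only finitely many nonzero entries; $\mathscr S$ is the set of all of them; $\operatorname{supp}(s)=\{i:s_i\ne0\}$; $\mathscr S_+=\mathscr S\cap\{0,+\}^\omega$. $\mathrm{SC}(t)$ is the number of pairs $i<j$ with $\{t_i,t_j\}=\{-,+\}$ and $t_k=0$ for all $i<k<j$. For $s\in\mathscr S_+$, $\mathfrak d(s)=\max\{\mathrm{SC}(t): t\in\mathscr S,\ t_i\in\{-,0,s_i\}\ \forall i\}$. The interval decomposition of $s\in\mathscr S_+$ is the unique decomposition $\operatorname{supp}(s)=X_0\amalg\cdots\amalg X_k$ such that each $X_i$ is an interval of $\omega$; $0\in X_0$ if $0\in\operatorname{supp}(s)$ and $X_0=\emptyset$ otherwise; $X_i\neq\emptyset$ for $i\in[k]$; and $\min X_i-\max X_{i-1}\ge 2$ for $i\in[k]$ (with $\max\emptyset=-\infty$). *)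

theory Defs
  imports Complex_Main
begin

datatype sign = Neg | Zer | Pos

definition supp :: "(nat \<Rightarrow> sign) \<Rightarrow> nat set" where
  "supp s = {i. s i \<noteq> Zer}"

definition finseqs :: "(nat \<Rightarrow> sign) set" where
  "finseqs = {s. finite (supp s)}"

definition finseqs_plus :: "(nat \<Rightarrow> sign) set" where
  "finseqs_plus = {s \<in> finseqs. \<forall>i. s i \<in> {Zer, Pos}}"

definition SC :: "(nat \<Rightarrow> sign) \<Rightarrow> nat" where
  "SC t = card {(i, j). i < j \<and> {t i, t j} = {Neg, Pos} \<and> (\<forall>k. i < k \<and> k < j \<longrightarrow> t k = Zer)}"

definition dmax :: "(nat \<Rightarrow> sign) \<Rightarrow> nat" where
  "dmax s = Max {SC t | t. t \<in> finseqs \<and> (\<forall>i. t i \<in> {Neg, Zer, s i})}"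

definition is_interval :: "nat set \<Rightarrow> bool" where
  "is_interval X \<longleftrightarrow> (\<forall>a b c. a \<in> X \<and> c \<in> X \<and> a \<le> b \<and> b \<le> c \<longrightarrow> b \<in> X)"

definition interval_decomp :: "(nat \<Rightarrow> sign) \<Rightarrow> nat \<Rightarrow> (nat \<Rightarrow> nat set) \<Rightarrow> bool" where
  "interval_decomp s k X \<longleftrightarrow>
     supp s = (\<Union>i\<in>{0..k}. X i) \<and>
     (\<forall>i\<in>{0..k}. \<forall>j\<in>{0..k}. i \<noteq> j \<longrightarrow> X i \<inter> X j = {}) \<and>
     (\<forall>i\<in>{0..k}. is_interval (X i)) \<and>
     (0 \<in> supp s \<longrightarrow> 0 \<in> X 0) \<and> (0 \<notin> supp s \<longrightarrow> X 0 = {}) \<and>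
     (\<forall>i\<in>{1..k}. X i \<noteq> {}) \<and>
     (\<forall>i\<in>{1..k}. X (i - 1) \<noteq> {} \<longrightarrow> Min (X i) \<ge> Max (X (i - 1)) + 2)"

end

theory Submission
  imports Defs
begin

text \<open>Every sign change of t has exactly one endpoint carrying Pos. So SC t is the number
  of rises (Pos entries whose nearest nonzero entry to the left is Neg) plus the number of falls
  (Pos entries whose nearest nonzero entry to the right is Neg). Neither rises nor falls contain
  two consecutive positions, and 0 is never a rise, so an interval block B of supp s contains at
  most \<lceil>#(B - {0})/2\<rceil> rises and \<lceil>#B/2\<rceil> falls. Both bounds are attained at
  once by filling each block with Pos, Neg, Pos, ... counted from its right end and every gap
  with Neg. For the block X 0, which contains 0 unless empty, the two bounds add up to #X 0.\<close>

definition sign_changes :: "(nat \<Rightarrow> sign) \<Rightarrow> (nat \<times> nat) set" where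
  "sign_changes t =
     {(i, j). i < j \<and> {t i, t j} = {Neg, Pos} \<and> (\<forall>k. i < k \<and> k < j \<longrightarrow> t k = Zer)}"

definition rises :: "(nat \<Rightarrow> sign) \<Rightarrow> nat set" where
  "rises t = {j. t j = Pos \<and> (\<exists>i. (i, j) \<in> sign_changes t)}"

definition falls :: "(nat \<Rightarrow> sign) \<Rightarrow> nat set" where
  "falls t = {i. t i = Pos \<and> (\<exists>j. (i, j) \<in> sign_changes t)}"

definition no_consecutive :: "nat set \<Rightarrow> bool" where
  "no_consecutive Y \<longleftrightarrow> (\<forall>p\<in>Y. Suc p \<notin> Y)"

lemma SC_eq_card_sign_changes: "SC t = card (sign_changes t)"
  unfolding SC_def sign_changes_def by simp

lemma sign_changes_subset_supp: "sign_changes t \<subseteq> supp t \<times> supp t"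
  unfolding sign_changes_def supp_def by (auto simp: doubleton_eq_iff)

lemma sign_changes_unique_left:
  "(i, j) \<in> sign_changes t \<Longrightarrow> (i', j) \<in> sign_changes t \<Longrightarrow> i = i'"
  unfolding sign_changes_def
  by (clarsimp, metis linorder_neqE_nat sign.distinct insert_commute doubleton_eq_iff)

lemma sign_changes_unique_right:
  "(i, j) \<in> sign_changes t \<Longrightarrow> (i, j') \<in> sign_changes t \<Longrightarrow> j = j'"
  unfolding sign_changes_def
  by (clarsimp, metis linorder_neqE_nat sign.distinct insert_commute doubleton_eq_iff)

lemma Suc_in_sign_changes: "{t i, t (Suc i)} = {Neg, Pos} \<Longrightarrow> (i, Suc i) \<in> sign_changes t"
  unfolding sign_changes_def by (simp add: less_Suc_eq) arith

lemma SC_eq_card_rises_falls: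
  assumes "finite (supp t)"
  shows "SC t = card (rises t) + card (falls t)"
proof -
  let ?up = "{c \<in> sign_changes t. t (snd c) = Pos}"
  let ?down = "{c \<in> sign_changes t. t (fst c) = Pos}"
  have "finite (sign_changes t)"
    using assms sign_changes_subset_supp finite_subset by blast
  then have finite_parts: "finite ?up" "finite ?down" by simp_all
  have "sign_changes t = ?up \<union> ?down" "?up \<inter> ?down = {}"
    unfolding sign_changes_def by (auto simp: doubleton_eq_iff)
  then have "SC t = card ?up + card ?down"
    using SC_eq_card_sign_changes card_Un_disjoint[OF finite_parts] by metis
  moreover have "rises t = snd ` ?up" "falls t = fst ` ?down"
    unfolding rises_def falls_def by (auto simp: image_iff)
  moreover have "inj_on snd ?up"
    by (rule inj_onI) (auto intro: sign_changes_unique_left)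
  moreover have "inj_on fst ?down"
    by (rule inj_onI) (auto intro: sign_changes_unique_right)
  ultimately show ?thesis by (simp add: card_image)
qed

lemma zero_notin_rises: "0 \<notin> rises t"
  unfolding rises_def sign_changes_def by auto

lemma no_consecutive_rises: "no_consecutive (rises t)"
  unfolding no_consecutive_def
proof (intro ballI notI)
  fix p assume "p \<in> rises t" "Suc p \<in> rises t"
  then obtain i where "t p = Pos" "(i, Suc p) \<in> sign_changes t" "t (Suc p) = Pos"
    unfolding rises_def by blast
  then have "i \<le> p" "t i = Neg" "\<forall>k. i < k \<and> k < Suc p \<longrightarrow> t k = Zer"
    unfolding sign_changes_def by (auto simp: doubleton_eq_iff)
  then show False
    using \<open>t p = Pos\<close> by (cases "i = p") auto
qed

lemma no_consecutive_falls: "no_consecutive (falls t)"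
  unfolding no_consecutive_def
proof (intro ballI notI)
  fix p assume "p \<in> falls t" "Suc p \<in> falls t"
  then obtain j where "(p, j) \<in> sign_changes t" "t p = Pos" "t (Suc p) = Pos"
    unfolding falls_def by blast
  then have "Suc p \<le> j" "t j = Neg" "\<forall>k. p < k \<and> k < j \<longrightarrow> t k = Zer"
    unfolding sign_changes_def by (auto simp: doubleton_eq_iff)
  then show False
    using \<open>t (Suc p) = Pos\<close> by (cases "Suc p = j") auto
qed

lemma no_consecutive_Int: "no_consecutive Y \<Longrightarrow> no_consecutive (Y \<inter> Z)"
  unfolding no_consecutive_def by blast

lemma card_no_consecutive_le:
  assumes "finite X" "is_interval X" "Y \<subseteq> X" "no_consecutive Y"
  shows "card Y \<le> (card X + 1) div 2"
proof -
  have "Suc ` Y \<subseteq> insert (Suc (Max X)) X"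
  proof
    fix q assume "q \<in> Suc ` Y"
    then obtain y where y: "y \<in> X" "q = Suc y" using assms(3) by blast
    show "q \<in> insert (Suc (Max X)) X"
    proof (cases "y = Max X")
      case False
      then have "Suc y \<le> Max X" using Max_ge[OF assms(1) y(1)] by simp
      moreover have "Max X \<in> X" using assms(1) y(1) by (intro Max_in) auto
      ultimately have "Suc y \<in> X"
        using assms(2) y(1) unfolding is_interval_def by (meson le_SucI order_refl)
      then show ?thesis using y(2) by simp
    qed (use y in simp)
  qed
  then have "Y \<union> Suc ` Y \<subseteq> insert (Suc (Max X)) X" using assms(3) by blast
  then have "card (Y \<union> Suc ` Y) \<le> card (insert (Suc (Max X)) X)"
    using assms(1) by (intro card_mono) simp_all
  also have "\<dots> \<le> card X + 1" using assms(1) by (simp add: card_insert_if)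
  finally have "card (Y \<union> Suc ` Y) \<le> card X + 1" .
  moreover have "Y \<inter> Suc ` Y = {}"
    using assms(4) unfolding no_consecutive_def by auto
  then have "card (Y \<union> Suc ` Y) = 2 * card Y"
    using finite_subset[OF assms(3,1)] by (simp add: card_Un_disjoint card_image)
  ultimately show ?thesis by linarith
qed

lemma half_card_le_card_filter:
  assumes "finite I" "\<And>p. p \<in> I \<Longrightarrow> \<not> P p \<Longrightarrow> Suc p \<in> I \<and> P (Suc p)"
  shows "(card I + 1) div 2 \<le> card {p \<in> I. P p}"
proof -
  have "card {p \<in> I. \<not> P p} \<le> card {p \<in> I. P p}"
    by (rule card_inj_on_le[of Suc]) (use assms in auto)
  moreover have "I = {p \<in> I. P p} \<union> {p \<in> I. \<not> P p}" by blast
  then have "card I = card {p \<in> I. P p} + card {p \<in> I. \<not> P p}"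
    using assms(1) by (metis (no_types, lifting) card_Un_disjoint disjoint_iff finite_Un mem_Collect_eq)
  ultimately show ?thesis by linarith
qed

lemma is_interval_Diff_zero: "is_interval X \<Longrightarrow> is_interval (X - {0})"
  unfolding is_interval_def by (metis Diff_iff le_0_eq singletonD singletonI)

lemma ceiling_half_eq_div: "\<lceil>real l / 2\<rceil> = int ((l + 1) div 2)"
proof -
  have "\<lceil>real l / 2\<rceil> = - (- int l div 2)"
    using ceiling_divide_eq_div[where 'a = real, of "int l" 2] by simp
  then show ?thesis by presburger
qed

definition run_length :: "nat set \<Rightarrow> nat \<Rightarrow> nat" where
  "run_length S p = (LEAST d. p + d \<notin> S)"

text \<open>Each maximal run of S is filled from its right end by Pos, Neg, Pos, ...; every other
  position up to one past Max S gets Neg, so that each Pos is a rise (unless it sits at 0) and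
  a fall.\<close>
definition alternating_fill :: "nat set \<Rightarrow> nat \<Rightarrow> sign" where
  "alternating_fill S p =
     (if p \<in> S \<and> odd (run_length S p) then Pos else if p \<le> Max S + 1 then Neg else Zer)"

lemma run_length_notin: "p \<notin> S \<Longrightarrow> run_length S p = 0"
  unfolding run_length_def by (rule Least_eq_0) simp

lemma run_length_in:
  assumes "finite S" "p \<in> S"
  shows "run_length S p = Suc (run_length S (Suc p))"
proof -
  obtain n where "\<forall>x\<in>S. x < n" using finite_nat_set_iff_bounded assms(1) by blast
  then have "p + n \<notin> S" by fastforce
  then have "(LEAST d. p + d \<notin> S) = Suc (LEAST d. p + Suc d \<notin> S)"
    by (rule Least_Suc) (simp add: assms(2))
  then show ?thesis unfolding run_length_def by simp
qed

lemma alternating_fill_Pos_in: "alternating_fill S p = Pos \<Longrightarrow> p \<in> S"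
  unfolding alternating_fill_def by (auto split: if_splits)

lemma finite_supp_alternating_fill: "finite S \<Longrightarrow> finite (supp (alternating_fill S))"
  by (rule finite_subset[of _ "{..Max S + 1}"])
    (auto simp: supp_def alternating_fill_def intro: le_SucI Max_ge)

lemma alternating_fill_Suc_not_Pos:
  assumes "finite S" "alternating_fill S p = Pos"
  shows "alternating_fill S (Suc p) \<noteq> Pos"
proof -
  have "p \<in> S" "odd (run_length S p)"
    using assms(2) unfolding alternating_fill_def by (auto split: if_splits)
  then have "even (run_length S (Suc p))" using run_length_in[OF assms(1)] by simp
  then show ?thesis unfolding alternating_fill_def by auto
qed

lemma alternating_fill_Suc_Pos:
  assumes "finite S" "p \<in> S" "alternating_fill S p \<noteq> Pos"
  shows "Suc p \<in> S \<and> alternating_fill S (Suc p) = Pos"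
proof -
  have "even (run_length S p)"
    using assms(2,3) unfolding alternating_fill_def by (auto split: if_splits)
  then have "odd (run_length S (Suc p))" using run_length_in[OF assms(1,2)] by simp
  then have "Suc p \<in> S" using run_length_notin by fastforce
  with \<open>odd (run_length S (Suc p))\<close> show ?thesis unfolding alternating_fill_def by simp
qed

lemma alternating_fill_Neg:
  "p \<le> Max S + 1 \<Longrightarrow> alternating_fill S p \<noteq> Pos \<Longrightarrow> alternating_fill S p = Neg"
  unfolding alternating_fill_def by (auto split: if_splits)

lemma Pos_in_falls_alternating_fill:
  assumes "finite S" "alternating_fill S p = Pos"
  shows "p \<in> falls (alternating_fill S)"
proof -
  have "p \<le> Max S" using assms alternating_fill_Pos_in by simp
  then have "alternating_fill S (Suc p) = Neg"
    using alternating_fill_Neg alternating_fill_Suc_not_Pos[OF assms] by simp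
  then have "(p, Suc p) \<in> sign_changes (alternating_fill S)"
    using assms(2) by (intro Suc_in_sign_changes) auto
  then show ?thesis using assms(2) unfolding falls_def by blast
qed

lemma Pos_in_rises_alternating_fill:
  assumes "finite S" "alternating_fill S (Suc p) = Pos"
  shows "Suc p \<in> rises (alternating_fill S)"
proof -
  have "p \<le> Max S + 1"
    using alternating_fill_Pos_in[OF assms(2)] Max_ge[OF assms(1)] by fastforce
  moreover have "alternating_fill S p \<noteq> Pos"
    using alternating_fill_Suc_not_Pos[OF assms(1)] assms(2) by blast
  ultimately have "alternating_fill S p = Neg" by (rule alternating_fill_Neg)
  then have "(p, Suc p) \<in> sign_changes (alternating_fill S)"
    using assms(2) by (intro Suc_in_sign_changes) auto
  then show ?thesis using assms(2) unfolding rises_def by blast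
qed

lemma Pos_in_supp_if_dominated: "\<forall>i. t i \<in> {Neg, Zer, s i} \<Longrightarrow> t p = Pos \<Longrightarrow> p \<in> supp s"
  by (drule spec[of _ p]) (auto simp: supp_def)

definition block_weight :: "nat set \<Rightarrow> nat" where
  "block_weight B = (card (B - {0}) + 1) div 2 + (card B + 1) div 2"

context
  fixes s :: "nat \<Rightarrow> sign" and k :: nat and X :: "nat \<Rightarrow> nat set"
  assumes finite_supp: "finite (supp s)" and decomp: "interval_decomp s k X"
begin

lemma supp_eq_Union_blocks: "supp s = (\<Union>m\<in>{0..k}. X m)"
  using decomp unfolding interval_decomp_def by blast

lemma blocks_disjoint: "i \<le> k \<Longrightarrow> j \<le> k \<Longrightarrow> i \<noteq> j \<Longrightarrow> X i \<inter> X j = {}"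
  using decomp unfolding interval_decomp_def by simp

lemma is_interval_block: "m \<le> k \<Longrightarrow> is_interval (X m)"
  using decomp unfolding interval_decomp_def by simp

lemma first_block_cases: "X 0 = {} \<or> 0 \<in> X 0"
  using decomp unfolding interval_decomp_def by blast

lemma zero_in_first_block: "0 \<in> supp s \<Longrightarrow> 0 \<in> X 0"
  using decomp unfolding interval_decomp_def by blast

lemma nonempty_block: "1 \<le> m \<Longrightarrow> m \<le> k \<Longrightarrow> X m \<noteq> {}"
  using decomp unfolding interval_decomp_def by simp

lemma block_step:
  "1 \<le> m \<Longrightarrow> m \<le> k \<Longrightarrow> X (m - 1) \<noteq> {} \<Longrightarrow> Max (X (m - 1)) + 2 \<le> Min (X m)"
  using decomp unfolding interval_decomp_def by simp

lemma block_subset_supp: "m \<le> k \<Longrightarrow> X m \<subseteq> supp s"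
  using supp_eq_Union_blocks by auto

lemma finite_block: "m \<le> k \<Longrightarrow> finite (X m)"
  using block_subset_supp finite_supp finite_subset by blast

lemma zero_notin_block:
  assumes "1 \<le> m" "m \<le> k"
  shows "0 \<notin> X m"
proof
  assume "0 \<in> X m"
  then have "0 \<in> X 0" using zero_in_first_block block_subset_supp assms(2) by blast
  with \<open>0 \<in> X m\<close> show False using blocks_disjoint[of 0 m] assms by auto
qed

lemma block_gap: "i < j \<Longrightarrow> j \<le> k \<Longrightarrow> X i \<noteq> {} \<Longrightarrow> Max (X i) + 2 \<le> Min (X j)"
proof (induction j)
  case 0
  then show ?case by simp
next
  case (Suc j)
  show ?case
  proof (cases "i = j")
    case True
    then show ?thesis using Suc.prems block_step[of "Suc j"] by simp
  next
    case False
    then have "i < j" using Suc.prems(1) by simp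
    then have ne: "X j \<noteq> {}" using nonempty_block Suc.prems(2) by simp
    have "Max (X i) + 2 \<le> Min (X j)" using Suc.IH \<open>i < j\<close> Suc.prems by simp
    moreover have "Min (X j) \<le> Max (X j)" using finite_block[of j] ne Suc.prems(2) by simp
    moreover have "Max (X j) + 2 \<le> Min (X (Suc j))" using block_step[of "Suc j"] ne Suc.prems(2) by simp
    ultimately show ?thesis by linarith
  qed
qed

lemma Suc_in_block:
  assumes "m \<le> k" "p \<in> X m" "Suc p \<in> supp s"
  shows "Suc p \<in> X m"
proof (rule ccontr)
  assume "Suc p \<notin> X m"
  obtain j where j: "j \<le> k" "Suc p \<in> X j"
    using supp_eq_Union_blocks assms(3) by auto
  with \<open>Suc p \<notin> X m\<close> consider "m < j" | "j < m" by (metis linorder_neqE_nat)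
  then show False
  proof cases
    case 1
    then have "Max (X m) + 2 \<le> Min (X j)" using block_gap j assms(2) by blast
    moreover have "p \<le> Max (X m)" "Min (X j) \<le> Suc p"
      using finite_block assms(1,2) j by auto
    ultimately show False by linarith
  next
    case 2
    then have "Max (X j) + 2 \<le> Min (X m)" using block_gap j assms by blast
    moreover have "Suc p \<le> Max (X j)" "Min (X m) \<le> p"
      using finite_block assms(1,2) j by auto
    ultimately show False by linarith
  qed
qed

lemma card_eq_sum_blocks:
  assumes "Y \<subseteq> supp s"
  shows "card Y = (\<Sum>m\<in>{0..k}. card (Y \<inter> X m))"
proof -
  have "Y = (\<Union>m\<in>{0..k}. Y \<inter> X m)" using assms supp_eq_Union_blocks by auto
  also have "card \<dots> = (\<Sum>m\<in>{0..k}. card (Y \<inter> X m))"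
  proof (rule card_UN_disjoint)
    show "\<forall>i\<in>{0..k}. \<forall>j\<in>{0..k}. i \<noteq> j \<longrightarrow> Y \<inter> X i \<inter> (Y \<inter> X j) = {}"
    proof (intro ballI impI)
      fix i j assume "i \<in> {0..k}" "j \<in> {0..k}" "i \<noteq> j"
      then have "X i \<inter> X j = {}" by (intro blocks_disjoint) auto
      then show "Y \<inter> X i \<inter> (Y \<inter> X j) = {}" by blast
    qed
  qed (use finite_block in auto)
  finally show ?thesis .
qed

lemma SC_eq_sum_blocks:
  assumes "finite (supp t)" "\<And>p. t p = Pos \<Longrightarrow> p \<in> supp s"
  shows "SC t = (\<Sum>m\<in>{0..k}. card (rises t \<inter> X m) + card (falls t \<inter> X m))"
proof -
  have "rises t \<subseteq> supp s" "falls t \<subseteq> supp s"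
    using assms(2) unfolding rises_def falls_def by auto
  then show ?thesis
    using SC_eq_card_rises_falls[OF assms(1)] card_eq_sum_blocks by (simp add: sum.distrib)
qed

lemma SC_le_sum_block_weight:
  assumes "finite (supp t)" "\<And>p. t p = Pos \<Longrightarrow> p \<in> supp s"
  shows "SC t \<le> (\<Sum>m\<in>{0..k}. block_weight (X m))"
proof -
  have "card (rises t \<inter> X m) + card (falls t \<inter> X m) \<le> block_weight (X m)"
    if "m \<in> {0..k}" for m
  proof -
    have m: "finite (X m)" "is_interval (X m)"
      using that finite_block is_interval_block by auto
    have "card (rises t \<inter> X m) \<le> (card (X m - {0}) + 1) div 2"
      using m zero_notin_rises no_consecutive_Int[OF no_consecutive_rises] is_interval_Diff_zero
      by (intro card_no_consecutive_le) auto
    moreover have "card (falls t \<inter> X m) \<le> (card (X m) + 1) div 2"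
      using m no_consecutive_Int[OF no_consecutive_falls] by (intro card_no_consecutive_le) auto
    ultimately show ?thesis unfolding block_weight_def by linarith
  qed
  then have "(\<Sum>m\<in>{0..k}. card (rises t \<inter> X m) + card (falls t \<inter> X m))
      \<le> (\<Sum>m\<in>{0..k}. block_weight (X m))"
    by (rule sum_mono)
  then show ?thesis using SC_eq_sum_blocks[OF assms] by simp
qed

lemma sum_block_weight_le_SC_alternating_fill:
  "(\<Sum>m\<in>{0..k}. block_weight (X m)) \<le> SC (alternating_fill (supp s))"
  (is "_ \<le> SC ?t")
proof -
  have "block_weight (X m) \<le> card (rises ?t \<inter> X m) + card (falls ?t \<inter> X m)"
    if m: "m \<le> k" for m
  proof -
    have closed: "Suc p \<in> X m \<and> ?t (Suc p) = Pos" if "p \<in> X m" "?t p \<noteq> Pos" for p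
      using alternating_fill_Suc_Pos[OF finite_supp] Suc_in_block block_subset_supp m that by blast
    have "(card (X m - {0}) + 1) div 2 \<le> card {p \<in> X m - {0}. ?t p = Pos}"
      using finite_block[OF m] closed by (intro half_card_le_card_filter) auto
    also have "\<dots> \<le> card (rises ?t \<inter> X m)"
      using finite_block[OF m] Pos_in_rises_alternating_fill[OF finite_supp]
      by (intro card_mono) (auto simp: gr0_conv_Suc)
    finally have rises_bound: "(card (X m - {0}) + 1) div 2 \<le> card (rises ?t \<inter> X m)" .
    have "(card (X m) + 1) div 2 \<le> card {p \<in> X m. ?t p = Pos}"
      using finite_block[OF m] closed by (intro half_card_le_card_filter) auto
    also have "\<dots> \<le> card (falls ?t \<inter> X m)"
      using finite_block[OF m] Pos_in_falls_alternating_fill[OF finite_supp]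
      by (intro card_mono) auto
    finally show ?thesis using rises_bound unfolding block_weight_def by linarith
  qed
  then have "(\<Sum>m\<in>{0..k}. block_weight (X m))
      \<le> (\<Sum>m\<in>{0..k}. card (rises ?t \<inter> X m) + card (falls ?t \<inter> X m))"
    by (intro sum_mono) auto
  also have "\<dots> = SC ?t"
    using finite_supp_alternating_fill[OF finite_supp] alternating_fill_Pos_in
    by (intro SC_eq_sum_blocks[symmetric]) auto
  finally show ?thesis .
qed

lemma sum_block_weight_eq:
  "int (\<Sum>m\<in>{0..k}. block_weight (X m))
     = int (card (X 0)) + (\<Sum>i\<in>{1..k}. 2 * \<lceil>real (card (X i)) / 2\<rceil>)"
proof -
  have "block_weight (X 0) = card (X 0)"
  proof (cases "X 0 = {}")
    case False
    then have "0 \<in> X 0" "card (X 0) > 0" using first_block_cases finite_block[of 0] by auto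
    then show ?thesis using finite_block[of 0] by (simp add: block_weight_def)
  qed (simp add: block_weight_def)
  moreover have "int (block_weight (X i)) = 2 * \<lceil>real (card (X i)) / 2\<rceil>"
    if "i \<in> {1..k}" for i
    using zero_notin_block that by (simp add: block_weight_def ceiling_half_eq_div)
  ultimately show ?thesis
    by (simp add: sum.atLeast_Suc_atMost of_nat_sum)
qed

end

theorem mainTheorem2:
  fixes s :: "nat \<Rightarrow> sign" and k :: nat and X :: "nat \<Rightarrow> nat set"
  assumes "s \<in> finseqs_plus"
    and "interval_decomp s k X"
  shows "int (dmax s) = int (card (X 0)) + (\<Sum>i\<in>{1..k}. 2 * \<lceil>real (card (X i)) / 2\<rceil>)"
proof -
  have fin: "finite (supp s)" and Pos_on_supp: "\<And>p. p \<in> supp s \<Longrightarrow> s p = Pos"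
    using assms(1) unfolding finseqs_plus_def finseqs_def supp_def by auto
  let ?T = "{SC t | t. t \<in> finseqs \<and> (\<forall>i. t i \<in> {Neg, Zer, s i})}"
  let ?W = "\<Sum>m\<in>{0..k}. block_weight (X m)"
  let ?t = "alternating_fill (supp s)"
  have upper: "n \<le> ?W" if n: "n \<in> ?T" for n
  proof -
    obtain t where t: "n = SC t" "finite (supp t)" "\<forall>i. t i \<in> {Neg, Zer, s i}"
      using n unfolding finseqs_def by blast
    show ?thesis
      using SC_le_sum_block_weight[OF fin assms(2) t(2) Pos_in_supp_if_dominated[OF t(3)]] t(1)
      by simp
  qed
  have "?t i \<in> {Neg, Zer, s i}" for i
    using alternating_fill_Pos_in[of "supp s" i] Pos_on_supp[of i] by (cases "?t i") auto
  then have witness: "SC ?t \<in> ?T"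
    using finite_supp_alternating_fill[OF fin] unfolding finseqs_def by blast
  have "?T \<subseteq> {..?W}" using upper by blast
  then have "finite ?T" by (rule finite_subset) simp
  have "dmax s = ?W"
    unfolding dmax_def
  proof (rule antisym)
    show "Max ?T \<le> ?W"
      by (rule Max.boundedI) (use \<open>finite ?T\<close> witness upper in blast)+
    show "?W \<le> Max ?T"
      using sum_block_weight_le_SC_alternating_fill[OF fin assms(2)] Max_ge[OF \<open>finite ?T\<close> witness]
      by linarith
  qed
  then show ?thesis using sum_block_weight_eq[OF fin assms(2)] by simp
qed

end
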